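(* Let $q$ be a power of an odd prime, write $q-1=2^s r$ with $r$ odd, and let $c\in\mathbb{F}_q^*$. The functional graph of $f(X)=c(X^{q+1}-X^2)$ over $\mathbb{F}_{q^2}$ is isomorphic to $$\mathscr{Z}(q)\ \oplus\ \bigoplus_{d\mid r}\frac{\varphi(d)(q-1)}{2\,\mathrm{ord}_{3d}(4)}\times\big(Cyc(2\,\mathrm{ord}_{3d}(4)),\mathscr{T}(s)\big).$$
   Context: The functional graph of a map $f:\mathbb{F}_{q^2}\to\mathbb{F}_{q^2}$ is the directed graph with vertex set $\mathbb{F}_{q^2}$ and an edge $x\to f(x)$ for every $x$. $Cyc(n)$ is the directed cycle of length $n$. $\mathscr{T}(1)$ is the tree with two vertices $P_1,P$ and the edge $P_1\to P$ (root $P$); for $m\ge1$, $\mathscr{T}(m+1)$ is obtained from $\mathscr{T}(m)$ by attaching two new vertices, each with an edge directed to it, to every vertex of the last (top) level of $\mathscr{T}(m)$. $(Cyc(n),\mathscr{T}(m))$ is the graph obtained from $Cyc(n)$ by replacing each vertex of the cycle by a copy of $\mathscr{T}(m)$ whose root is that cycle vertex. $\mathscr{Z}(q)$ is the graph consisting of a vertex with a loop ($Cyc(1)$) to which $\frac{q-1}{2}$ copies of $\mathscr{T}(1)$ and $\frac{q-1}{2}$ copies of $\mathscr{T}(2)$ are attached, the root of each copy being identified with the fixed vertex. $\oplus$ denotes disjoint union and $k\times G$ denotes $k$ disjoint copies of $G$. $\varphi$ is Euler's totient function and $\mathrm{ord}_m(n)$ is the multiplicative order of $n$ modulo $m$.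 *)

theory Defs
  imports "HOL-Number_Theory.Number_Theory"
begin

text \<open>Functional graphs are represented as pairs (V, g) of a vertex set and the
  successor map (every vertex has exactly one outgoing edge x \<rightarrow> g x).\<close>

definition fg_iso :: "'a set \<times> ('a \<Rightarrow> 'a) \<Rightarrow> 'b set \<times> ('b \<Rightarrow> 'b) \<Rightarrow> bool" where
  "fg_iso G H \<longleftrightarrow> (\<exists>h. bij_betw h (fst G) (fst H) \<and>
      (\<forall>x\<in>fst G. h (snd G x) = snd H (h x)))"

text \<open>Tree T(m): root None; level k \<ge> 1 vertices are Some bs with length bs = k - 1.\<close>

definition tree_verts :: "nat \<Rightarrow> bool list option set" where
  "tree_verts m = insert None (Some ` {bs. length bs < m})"

fun tree_par :: "bool list option \<Rightarrow> bool list option" where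
  "tree_par None = None"
| "tree_par (Some []) = None"
| "tree_par (Some (b # bs)) = Some bs"

text \<open>(Cyc(n), T(m)): vertex (i, t), i < n cycle index, t a vertex of the tree copy at i.\<close>

definition cyc_tree_verts :: "nat \<Rightarrow> nat \<Rightarrow> (nat \<times> bool list option) set" where
  "cyc_tree_verts n m = {0..<n} \<times> tree_verts m"

fun cyc_tree_map :: "nat \<Rightarrow> nat \<times> bool list option \<Rightarrow> nat \<times> bool list option" where
  "cyc_tree_map n (i, None) = (Suc i mod n, None)"
| "cyc_tree_map n (i, Some v) = (i, tree_par (Some v))"

text \<open>Z(q): fixed vertex None; Some (False, j, bs) are the non-root vertices of the j-th
  copy of T(1), Some (True, j, bs) those of the j-th copy of T(2).\<close>

definition Z_verts :: "nat \<Rightarrow> (bool \<times> nat \<times> bool list) option set" where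
  "Z_verts q = insert None
     ({Some (False, j, bs) | j bs. j < (q - 1) div 2 \<and> length bs < 1} \<union>
      {Some (True, j, bs) | j bs. j < (q - 1) div 2 \<and> length bs < 2})"

fun Z_map :: "(bool \<times> nat \<times> bool list) option \<Rightarrow> (bool \<times> nat \<times> bool list) option" where
  "Z_map None = None"
| "Z_map (Some (k, j, [])) = None"
| "Z_map (Some (k, j, b # bs)) = Some (k, j, bs)"

definition cyc_len :: "nat \<Rightarrow> nat" where
  "cyc_len d = 2 * ord (3 * d) 4"

definition mult_d :: "nat \<Rightarrow> nat \<Rightarrow> nat" where
  "mult_d q d = totient d * (q - 1) div (2 * ord (3 * d) 4)"

text \<open>The target graph
  Z(q) \<oplus> \<Oplus>_{d | r} mult_d q d \<times> (Cyc(cyc_len d), T(s)).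
  Component vertices: Inr (d, j, x) is vertex x of the j-th copy for divisor d.\<close>

definition target_verts :: "nat \<Rightarrow> nat \<Rightarrow> nat \<Rightarrow>
    ((bool \<times> nat \<times> bool list) option + nat \<times> nat \<times> nat \<times> bool list option) set" where
  "target_verts q r s = Inl ` Z_verts q \<union>
     Inr ` {(d, j, x) | d j x. d dvd r \<and> j < mult_d q d \<and> x \<in> cyc_tree_verts (cyc_len d) s}"

fun target_map :: "(bool \<times> nat \<times> bool list) option + nat \<times> nat \<times> nat \<times> bool list option \<Rightarrow>
    (bool \<times> nat \<times> bool list) option + nat \<times> nat \<times> nat \<times> bool list option" where
  "target_map (Inl z) = Inl (Z_map z)"
| "target_map (Inr (d, j, x)) = Inr (d, j, cyc_tree_map (cyc_len d) x)"

end

theory Submission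
  imports Defs "HOL-Combinatorics.Orbits" "HOL-Decision_Procs.Algebra_Aux"
begin

text \<open>Write \<open>\<bbbF>\<^sub>q\<^sub>2 = \<bbbF>\<^sub>q + \<omega> \<bbbF>\<^sub>q\<close> with \<open>\<omega>\<^sup>q = -\<omega>\<close> and \<open>\<omega>\<^sup>2 = g\<close> a generator of \<open>\<bbbF>\<^sub>q\<^sup>*\<close>.
  In the coordinates \<open>x = (t + \<omega> v) / (-2c)\<close> the map becomes \<open>(t, v) \<mapsto> (g v\<^sup>2, t v)\<close> on
  \<open>\<bbbF>\<^sub>q \<times> \<bbbF>\<^sub>q\<close>. On the axes \<open>t v = 0\<close> this is the graph \<open>\<Z>(q)\<close>. On the torus \<open>t = g\<^sup>T\<close>,
  \<open>v = g\<^sup>V\<close> it is the affine map \<open>(T, V) \<mapsto> (1 + 2V, T + V)\<close> on \<open>(\<int>/(q - 1))\<^sup>2\<close>, which splits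
  by the Chinese remainder theorem. Modulo \<open>2\<^sup>s\<close> it is conjugate to the doubling \<open>R \<mapsto> 2R\<close>, whose
  functional graph is the tree \<open>\<T>(s)\<close>, times the fixed point free involution \<open>Q \<mapsto> 1 - Q\<close>.
  Modulo \<open>r\<close> the residue \<open>1 + T + 2V\<close> is doubled, so its additive order \<open>d\<close> is invariant; together
  with the involution, the points of order \<open>d\<close> have exact period \<open>2 ord\<^sub>3\<^sub>d(4)\<close>, and there are
  \<open>\<phi>(d)(q - 1)\<close> of them.\<close>

section \<open>Isomorphisms of functional graphs\<close>

lemma fg_isoI:
  assumes "bij_betw h V W" and "\<And>x. x \<in> V \<Longrightarrow> h (g x) = k (h x)"
  shows "fg_iso (V, g) (W, k)"
  using assms unfolding fg_iso_def by auto

lemma fg_iso_refl: "fg_iso (V, g) (V, g)"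
  by (rule fg_isoI[of id]) auto

lemma fg_iso_sym:
  assumes "fg_iso (V, g) (W, k)" and "\<And>x. x \<in> V \<Longrightarrow> g x \<in> V"
  shows "fg_iso (W, k) (V, g)"
proof -
  obtain h where h: "bij_betw h V W" "\<And>x. x \<in> V \<Longrightarrow> h (g x) = k (h x)"
    using assms(1) unfolding fg_iso_def by auto
  show ?thesis
  proof (rule fg_isoI[OF bij_betw_inv_into[OF h(1)]])
    fix w assume "w \<in> W"
    then obtain x where "x \<in> V" "w = h x"
      using h(1) by (auto simp: bij_betw_def)
    then show "inv_into V h (k w) = g (inv_into V h w)"
      using h assms(2) by (metis bij_betw_imp_inj_on inv_into_f_f)
  qed
qed

lemma fg_iso_trans [trans]:
  assumes "fg_iso (U, f) (V, g)" and "fg_iso (V, g) (W, k)"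
  shows "fg_iso (U, f) (W, k)"
proof -
  obtain h1 where h1: "bij_betw h1 U V" "\<And>x. x \<in> U \<Longrightarrow> h1 (f x) = g (h1 x)"
    using assms(1) unfolding fg_iso_def by auto
  obtain h2 where h2: "bij_betw h2 V W" "\<And>y. y \<in> V \<Longrightarrow> h2 (g y) = k (h2 y)"
    using assms(2) unfolding fg_iso_def by auto
  show ?thesis
    by (rule fg_isoI[OF bij_betw_trans[OF h1(1) h2(1)]])
      (use h1 h2 in \<open>auto simp: bij_betw_def\<close>)
qed

lemma fg_iso_Plus:
  assumes "V1 \<inter> V2 = {}"
    and "\<And>x. x \<in> V1 \<Longrightarrow> g x \<in> V1" and "\<And>x. x \<in> V2 \<Longrightarrow> g x \<in> V2"
    and "fg_iso (V1, g) (W1, k1)" and "fg_iso (V2, g) (W2, k2)"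
  shows "fg_iso (V1 \<union> V2, g) (W1 <+> W2, map_sum k1 k2)"
proof -
  obtain h1 where h1: "bij_betw h1 V1 W1" "\<And>x. x \<in> V1 \<Longrightarrow> h1 (g x) = k1 (h1 x)"
    using assms(4) unfolding fg_iso_def by auto
  obtain h2 where h2: "bij_betw h2 V2 W2" "\<And>x. x \<in> V2 \<Longrightarrow> h2 (g x) = k2 (h2 x)"
    using assms(5) unfolding fg_iso_def by auto
  define h where "h x = (if x \<in> V1 then Inl (h1 x) else Inr (h2 x))" for x
  have "bij_betw h V1 (Inl ` W1)"
    using h1(1) by (auto simp: h_def bij_betw_def inj_on_def)
  moreover have "bij_betw h V2 (Inr ` W2)"
    using h2(1) assms(1) by (auto simp: h_def bij_betw_def inj_on_def image_image)
  ultimately have "bij_betw h (V1 \<union> V2) (W1 <+> W2)"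
    unfolding Plus_def by (rule bij_betw_combine) auto
  moreover have "h (g x) = map_sum k1 k2 (h x)" if "x \<in> V1 \<union> V2" for x
    using that assms(1-3) h1(2) h2(2) by (auto simp: h_def)
  ultimately show ?thesis by (rule fg_isoI)
qed

lemma fg_iso_times:
  assumes "fg_iso (V1, g1) (W1, k1)" and "fg_iso (V2, g2) (W2, k2)"
  shows "fg_iso (V1 \<times> V2, map_prod g1 g2) (W1 \<times> W2, map_prod k1 k2)"
proof -
  obtain h1 where h1: "bij_betw h1 V1 W1" "\<And>x. x \<in> V1 \<Longrightarrow> h1 (g1 x) = k1 (h1 x)"
    using assms(1) unfolding fg_iso_def by auto
  obtain h2 where h2: "bij_betw h2 V2 W2" "\<And>x. x \<in> V2 \<Longrightarrow> h2 (g2 x) = k2 (h2 x)"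
    using assms(2) unfolding fg_iso_def by auto
  show ?thesis
    by (rule fg_isoI[OF bij_betw_map_prod[OF h1(1) h2(1)]]) (use h1 h2 in auto)
qed

lemma fg_iso_prod_assoc:
  "fg_iso ((A \<times> B) \<times> C, map_prod (map_prod f g) h) (A \<times> (B \<times> C), map_prod f (map_prod g h))"
  by (rule fg_isoI[of "\<lambda>((a, b), c). (a, (b, c))"])
    (auto intro!: bij_betwI[where g = "\<lambda>(a, (b, c)). ((a, b), c)"])

lemma fg_iso_prod_left_commute:
  "fg_iso (A \<times> (B \<times> C), map_prod f (map_prod g h)) (B \<times> (A \<times> C), map_prod g (map_prod f h))"
  by (rule fg_isoI[of "\<lambda>(a, (b, c)). (b, (a, c))"])
    (auto intro!: bij_betwI[where g = "\<lambda>(b, (a, c)). (a, (b, c))"])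

lemma fg_iso_Sigma:
  assumes closed: "\<And>x. x \<in> V \<Longrightarrow> g x \<in> V"
    and range: "\<And>x. x \<in> V \<Longrightarrow> \<pi> x \<in> D"
    and invariant: "\<And>x. x \<in> V \<Longrightarrow> \<pi> (g x) = \<pi> x"
    and pieces: "\<And>d. d \<in> D \<Longrightarrow> fg_iso ({x \<in> V. \<pi> x = d}, g) (W d, k d)"
  shows "fg_iso (V, g) (Sigma D W, \<lambda>(d, w). (d, k d w))"
proof -
  have "\<forall>d\<in>D. \<exists>h. bij_betw h {x \<in> V. \<pi> x = d} (W d) \<and>
      (\<forall>x\<in>{x \<in> V. \<pi> x = d}. h (g x) = k d (h x))"
    using pieces unfolding fg_iso_def by auto
  from bchoice[OF this] obtain H where "\<forall>d\<in>D. bij_betw (H d) {x \<in> V. \<pi> x = d} (W d) \<and>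
      (\<forall>x\<in>{x \<in> V. \<pi> x = d}. H d (g x) = k d (H d x))"
    by blast
  then have H: "\<And>d. d \<in> D \<Longrightarrow> bij_betw (H d) {x \<in> V. \<pi> x = d} (W d)"
    "\<And>d x. d \<in> D \<Longrightarrow> x \<in> V \<Longrightarrow> \<pi> x = d \<Longrightarrow> H d (g x) = k d (H d x)"
    by auto
  define h where "h x = (\<pi> x, H (\<pi> x) x)" for x
  have "bij_betw h V (Sigma D W)"
  proof (rule bij_betwI')
    fix x y assume "x \<in> V" "y \<in> V"
    then show "(h x = h y) = (x = y)"
      using H(1)[of "\<pi> x"] range by (auto simp: h_def bij_betw_def inj_on_def)
  next
    fix x assume "x \<in> V"
    then show "h x \<in> Sigma D W"
      using H(1)[of "\<pi> x"] range by (auto simp: h_def bij_betw_def)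
  next
    fix y assume "y \<in> Sigma D W"
    then obtain d w where "y = (d, w)" "d \<in> D" "w \<in> W d" by auto
    then show "\<exists>x\<in>V. y = h x"
      using H(1)[of d] by (force simp: h_def bij_betw_def)
  qed
  moreover have "h (g x) = (\<lambda>(d, w). (d, k d w)) (h x)" if "x \<in> V" for x
    using that H(2) range invariant by (simp add: h_def)
  ultimately show ?thesis by (rule fg_isoI)
qed

lemma inj_on_card_imp_bij_betw:
  assumes "inj_on h A" and "h ` A \<subseteq> B" and "card A = card B" and "finite B"
  shows "bij_betw h A B"
  using assms by (metis bij_betw_def card_image card_subset_eq)

section \<open>Disjoint unions of cycles\<close>

lemma inj_on_funpow_period:
  assumes period: "\<And>m. (p ^^ m) x = x \<longleftrightarrow> L dvd m"
  shows "inj_on (\<lambda>i. (p ^^ i) x) {0..<L}"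
proof -
  have le: "i = j" if "i \<le> j" "j < L" and eq: "(p ^^ i) x = (p ^^ j) x" for i j
  proof -
    have "(p ^^ (L - j + i)) x = (p ^^ (L - j)) ((p ^^ j) x)"
      by (simp add: funpow_add eq)
    also have "\<dots> = (p ^^ (L - j + j)) x"
      by (simp add: funpow_add)
    also have "\<dots> = x"
      using \<open>j < L\<close> period[of L] by simp
    finally have "L dvd L - j + i"
      using period by blast
    with that have "L \<le> L - j + i"
      by (intro dvd_imp_le) auto
    with that show "i = j"
      by linarith
  qed
  show ?thesis
  proof (rule inj_onI)
    fix i j assume "i \<in> {0..<L}" "j \<in> {0..<L}" "(p ^^ i) x = (p ^^ j) x"
    then show "i = j"
      using le[of i j] le[of j i] by (cases "i \<le> j") auto
  qed
qed

lemma fg_iso_orbit_cycle: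
  assumes period: "\<And>m. (p ^^ m) x = x \<longleftrightarrow> L dvd m" and "0 < L"
  shows "fg_iso (orbit p x, p) ({0..<L}, \<lambda>i. Suc i mod L)"
proof (rule fg_iso_sym)
  have L: "(p ^^ L) x = x"
    using period by simp
  then have "orbit p x = (\<lambda>i. (p ^^ i) x) ` {0..<L}"
    using \<open>0 < L\<close> by (subst orbit_altdef_bounded) auto
  then have "bij_betw (\<lambda>i. (p ^^ i) x) {0..<L} (orbit p x)"
    using inj_on_funpow_period[OF period] by (simp add: bij_betw_def)
  moreover have "(p ^^ (Suc i mod L)) x = p ((p ^^ i) x)" for i
    using funpow_mod_eq[OF L, of "Suc i"] by simp
  ultimately show "fg_iso ({0..<L}, \<lambda>i. Suc i mod L) (orbit p x, p)"
    by (rule fg_isoI)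
  show "Suc i mod L \<in> {0..<L}" for i
    using \<open>0 < L\<close> by simp
qed

lemma orbit_eq_iff_mem:
  assumes "x \<in> orbit p x" and "y \<in> orbit p y"
  shows "orbit p y = orbit p x \<longleftrightarrow> y \<in> orbit p x"
proof
  assume y: "y \<in> orbit p x"
  then have x: "x \<in> orbit p y"
    by (rule orbit_swap[OF assms(1)])
  show "orbit p y = orbit p x"
  proof (intro subset_antisym subsetI)
    fix z assume "z \<in> orbit p y"
    then show "z \<in> orbit p x" using y by (rule orbit_trans)
  next
    fix z assume "z \<in> orbit p x"
    then show "z \<in> orbit p y" using x by (rule orbit_trans)
  qed
qed (use assms(2) in simp)

lemma orbit_eq_piece:
  assumes closed: "\<And>x. x \<in> P \<Longrightarrow> p x \<in> P" and periodic: "\<And>x. x \<in> P \<Longrightarrow> x \<in> orbit p x"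
    and "x \<in> P"
  shows "{y \<in> P. orbit p y = orbit p x} = orbit p x"
proof (intro equalityI subsetI)
  fix y assume "y \<in> {y \<in> P. orbit p y = orbit p x}"
  then show "y \<in> orbit p x"
    using orbit_eq_iff_mem[OF periodic[OF \<open>x \<in> P\<close>] periodic] by blast
next
  fix y assume y: "y \<in> orbit p x"
  then have "y \<in> P"
    using \<open>x \<in> P\<close> closed by induction auto
  with y show "y \<in> {y \<in> P. orbit p y = orbit p x}"
    using orbit_eq_iff_mem[OF periodic[OF \<open>x \<in> P\<close>] periodic] by blast
qed

lemma fg_iso_uniform_period:
  assumes "finite P" and "0 < L" and closed: "\<And>x. x \<in> P \<Longrightarrow> p x \<in> P"
    and period: "\<And>x m. x \<in> P \<Longrightarrow> (p ^^ m) x = x \<longleftrightarrow> L dvd m"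
  shows "fg_iso (P, p) ({0..<card P div L} \<times> {0..<L}, map_prod id (\<lambda>i. Suc i mod L))"
proof -
  have self_in: "x \<in> orbit p x" if "x \<in> P" for x
    unfolding orbit_altdef using period[OF that, of L] \<open>0 < L\<close> by force
  have piece: "{y \<in> P. orbit p y = orbit p x} = orbit p x" if "x \<in> P" for x
    using closed self_in that by (rule orbit_eq_piece)
  let ?O = "orbit p ` P"
  have "fg_iso (P, p) (Sigma ?O (\<lambda>_. {0..<L}), \<lambda>(c, i). (c, Suc i mod L))"
  proof (rule fg_iso_Sigma[where \<pi> = "orbit p"])
    show "orbit p (p x) = orbit p x" if "x \<in> P" for x
      using self_in_orbit_step[OF self_in[OF that]] .
    show "fg_iso ({y \<in> P. orbit p y = c}, p) ({0..<L}, \<lambda>i. Suc i mod L)" if "c \<in> ?O" for c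
    proof -
      from that obtain x where x: "x \<in> P" and c: "c = orbit p x" by blast
      show ?thesis
        unfolding c piece[OF x] using period[OF x] \<open>0 < L\<close> by (rule fg_iso_orbit_cycle)
    qed
  qed (use closed in auto)
  then have iso: "fg_iso (P, p) (?O \<times> {0..<L}, map_prod id (\<lambda>i. Suc i mod L))"
    by (simp add: map_prod_def case_prod_beta')
  then obtain h where "bij_betw h P (?O \<times> {0..<L})"
    unfolding fg_iso_def by auto
  then have "card P = card (?O \<times> {0..<L})"
    by (rule bij_betw_same_card)
  then have card: "card P div L = card ?O"
    using \<open>0 < L\<close> by (simp add: card_cartesian_product)
  obtain e where "bij_betw e ?O {0..<card ?O}"
    using ex_bij_betw_finite_nat finite_imageI[OF \<open>finite P\<close>] by blast
  then have "fg_iso (?O, id) ({0..<card ?O}, id)"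
    by (rule fg_isoI) simp
  from iso fg_iso_times[OF this fg_iso_refl] show ?thesis
    unfolding card by (rule fg_iso_trans)
qed

section \<open>The tree \<open>\<T>(s)\<close> as the doubling map modulo \<open>2\<^sup>s\<close>\<close>

fun binary_value :: "bool list \<Rightarrow> nat" where
  "binary_value [] = 0"
| "binary_value (b # bs) = of_bool b * 2 ^ length bs + binary_value bs"

lemma binary_value_less: "binary_value bs < 2 ^ length bs"
  by (induction bs) auto

lemma binary_value_inj:
  assumes "length bs = length cs" and "binary_value bs = binary_value cs"
  shows "bs = cs"
  using assms
proof (induction bs arbitrary: cs)
  case (Cons b bs)
  then obtain c cs' where cs: "cs = c # cs'" and len: "length cs' = length bs"
    by (cases cs) auto
  have "b = c"
    using Cons.prems binary_value_less[of bs] binary_value_less[of cs'] cs len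
    by (cases b; cases c) auto
  then show ?case
    using Cons cs len by simp
qed simp

lemma two_power_times_odd_inj:
  fixes x y :: nat
  assumes "2 ^ a * (2 * x + 1) = 2 ^ b * (2 * y + 1)"
  shows "a = b \<and> x = y"
proof -
  have *: "a = b \<and> x = y" if "a \<le> b" and eq: "2 ^ a * (2 * x + 1) = 2 ^ b * (2 * y + 1)"
    for a b x y :: nat
  proof -
    have "2 ^ b = 2 ^ a * (2 ^ (b - a) :: nat)"
      using \<open>a \<le> b\<close> by (simp flip: power_add)
    with eq have "2 ^ a * (2 * x + 1) = 2 ^ a * (2 ^ (b - a) * (2 * y + 1))"
      by (simp only: mult.assoc)
    then have odd: "2 * x + 1 = 2 ^ (b - a) * (2 * y + 1)"
      by (simp only: nat_mult_eq_cancel1 zero_less_power pos2)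
    have "odd (2 ^ (b - a) * (2 * y + 1))"
      unfolding odd[symmetric] by simp
    then have "b - a = 0"
      by simp
    with odd that show ?thesis by simp
  qed
  show ?thesis
    using *[of a b x y] *[of b a y x] assms by (cases "a \<le> b") auto
qed

lemma finite_tree_verts: "finite (tree_verts s)"
proof -
  have "{bs :: bool list. length bs < s} \<subseteq> {bs. set bs \<subseteq> UNIV \<and> length bs \<le> s}"
    by auto
  then have "finite {bs :: bool list. length bs < s}"
    using finite_lists_length_le[of "UNIV :: bool set" s] by (rule finite_subset) auto
  then show ?thesis
    unfolding tree_verts_def by simp
qed

lemma card_tree_verts: "card (tree_verts s) = 2 ^ s"
proof (induction s)
  case (Suc s)
  have "tree_verts (Suc s) = tree_verts s \<union> Some ` {bs. length bs = s}"
    by (auto simp: tree_verts_def less_Suc_eq)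
  moreover have "card (Some ` {bs :: bool list. length bs = s}) = 2 ^ s"
    using card_lists_length_eq[of "UNIV :: bool set" s] by (simp add: card_image)
  moreover have "tree_verts s \<inter> Some ` {bs. length bs = s} = {}"
    by (auto simp: tree_verts_def)
  ultimately show ?case
    using Suc finite_tree_verts finite_lists_length_eq[of "UNIV :: bool set" s]
    by (simp add: card_Un_disjoint)
qed (simp add: tree_verts_def)

text \<open>A vertex at depth \<open>k \<ge> 1\<close> of \<open>\<T>(s)\<close> is labelled by \<open>2\<^sup>s\<^sup>-\<^sup>k\<close> times an odd number below
  \<open>2\<^sup>k\<close>; doubling modulo \<open>2\<^sup>s\<close> drops the leading bit of the odd part, which is the step to
  the parent.\<close>

definition tree_label :: "nat \<Rightarrow> bool list option \<Rightarrow> nat" where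
  "tree_label s t = (case t of None \<Rightarrow> 0
     | Some bs \<Rightarrow> 2 ^ (s - Suc (length bs)) * (2 * binary_value bs + 1))"

lemma tree_label_less:
  assumes "t \<in> tree_verts s"
  shows "tree_label s t < 2 ^ s"
proof (cases t)
  case (Some bs)
  with assms have len: "Suc (length bs) \<le> s"
    by (auto simp: tree_verts_def)
  have "tree_label s t = 2 ^ (s - Suc (length bs)) * (2 * binary_value bs + 1)"
    using Some by (simp add: tree_label_def)
  also have "\<dots> < 2 ^ (s - Suc (length bs)) * 2 ^ Suc (length bs)"
    using binary_value_less[of bs] by (intro mult_strict_left_mono) simp_all
  also have "\<dots> = 2 ^ s"
    by (simp only: power_add[symmetric] le_add_diff_inverse2[OF len])
  finally show ?thesis .
qed (simp add: tree_label_def)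

lemma inj_on_tree_label: "inj_on (tree_label s) (tree_verts s)"
proof (rule inj_onI)
  fix t u assume t: "t \<in> tree_verts s" and u: "u \<in> tree_verts s"
    and eq: "tree_label s t = tree_label s u"
  show "t = u"
  proof (cases t; cases u)
    fix bs cs assume Some: "t = Some bs" "u = Some cs"
    with t u have "length bs < s" "length cs < s"
      by (auto simp: tree_verts_def)
    moreover have "s - Suc (length bs) = s - Suc (length cs) \<and> binary_value bs = binary_value cs"
      using eq Some by (intro two_power_times_odd_inj) (simp add: tree_label_def)
    ultimately show "t = u"
      using Some binary_value_inj by auto
  qed (use eq in \<open>auto simp: tree_label_def\<close>)
qed

lemma tree_label_tree_par:
  assumes "t \<in> tree_verts s"
  shows "tree_label s (tree_par t) = 2 * tree_label s t mod 2 ^ s"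
proof (cases t rule: tree_par.cases)
  case (3 b bs)
  with assms have len: "Suc (length bs) < s"
    by (auto simp: tree_verts_def)
  define e where "e = s - Suc (Suc (length bs))"
  have s: "s = e + Suc (Suc (length bs))"
    using len by (simp add: e_def)
  have "2 * tree_label s t = tree_label s (Some bs) + of_bool b * 2 ^ s"
    unfolding 3 tree_label_def s by (cases b) (simp_all add: power_add algebra_simps)
  moreover have "tree_label s (Some bs) < 2 ^ s"
    using len by (intro tree_label_less) (simp add: tree_verts_def)
  ultimately show ?thesis
    using 3 by simp
next
  case 2
  with assms show ?thesis
    by (cases s) (auto simp: tree_label_def tree_verts_def)
qed (simp add: tree_label_def)

lemma fg_iso_tree_verts_doubling:
  "fg_iso (tree_verts s, tree_par) ({0..<2 ^ s}, \<lambda>R :: nat. 2 * R mod 2 ^ s)"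
proof (rule fg_isoI)
  show "bij_betw (tree_label s) (tree_verts s) {0..<2 ^ s}"
    using tree_label_less by (intro inj_on_card_imp_bij_betw inj_on_tree_label)
      (auto simp: card_tree_verts)
qed (rule tree_label_tree_par)

lemma tree_par_in_tree_verts: "t \<in> tree_verts s \<Longrightarrow> tree_par t \<in> tree_verts s"
  by (cases t rule: tree_par.cases) (auto simp: tree_verts_def)

lemma fg_iso_doubling_tree_verts:
  "fg_iso ({0..<2 ^ s :: int}, \<lambda>R. 2 * R mod 2 ^ s) (tree_verts s, tree_par)"
proof -
  have "fg_iso ({0..<2 ^ s :: int}, \<lambda>R. 2 * R mod 2 ^ s) ({0..<2 ^ s :: nat}, \<lambda>R. 2 * R mod 2 ^ s)"
  proof (rule fg_isoI)
    have "bij_betw nat {0..<int (2 ^ s)} {0..<2 ^ s}"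
      by (rule bij_betwI[where g = int]) auto
    then show "bij_betw nat {0..<2 ^ s :: int} {0..<2 ^ s}"
      by simp
    show "nat (2 * R mod 2 ^ s) = 2 * nat R mod 2 ^ s" if "R \<in> {0..<2 ^ s}" for R
      using that by (simp add: nat_mod_distrib nat_mult_distrib nat_power_eq)
  qed
  also have "fg_iso \<dots> (tree_verts s, tree_par)"
    using fg_iso_tree_verts_doubling tree_par_in_tree_verts by (rule fg_iso_sym)
  finally show ?thesis .
qed

definition tree_depth :: "bool list option \<Rightarrow> nat" where
  "tree_depth t = (case t of None \<Rightarrow> 0 | Some bs \<Rightarrow> Suc (length bs))"

text \<open>The vertex \<open>(t, i)\<close> of the product reaches the cycle at position \<open>i + depth t\<close>.\<close>

lemma fg_iso_tree_times_cycle: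
  assumes "0 < L"
  shows "fg_iso (tree_verts s \<times> {0..<L}, map_prod tree_par (\<lambda>i. Suc i mod L))
                (cyc_tree_verts L s, cyc_tree_map L)"
proof (rule fg_isoI)
  let ?h = "\<lambda>(t, i). ((i + tree_depth t) mod L, t)"
  have "inj_on ?h (tree_verts s \<times> {0..<L})"
  proof (rule inj_onI, clarsimp)
    fix t i j assume "i < L" "j < L" "(i + tree_depth t) mod L = (j + tree_depth t) mod L"
    then have "[i = j] (mod L)"
      by (simp add: cong_def [symmetric] cong_add_rcancel_nat)
    with \<open>i < L\<close> \<open>j < L\<close> show "i = j"
      by (simp add: cong_def)
  qed
  then show "bij_betw ?h (tree_verts s \<times> {0..<L}) (cyc_tree_verts L s)"
    using \<open>0 < L\<close> finite_tree_verts
    by (intro inj_on_card_imp_bij_betw)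
      (auto simp: cyc_tree_verts_def card_cartesian_product)
  show "?h (map_prod tree_par (\<lambda>i. Suc i mod L) x) = cyc_tree_map L (?h x)"
    if "x \<in> tree_verts s \<times> {0..<L}" for x
  proof -
    obtain t i where x: "x = (t, i)" by fastforce
    show ?thesis
    proof (cases t)
      case None
      then show ?thesis
        by (simp add: x tree_depth_def mod_Suc_eq)
    next
      case (Some bs)
      have "tree_depth (tree_par (Some bs)) = length bs"
        by (cases bs) (simp_all add: tree_depth_def)
      moreover have "(Suc i mod L + length bs) mod L = (i + Suc (length bs)) mod L"
        by (simp add: mod_add_left_eq)
      ultimately show ?thesis
        by (simp add: x Some tree_depth_def)
    qed
  qed
qed

lemma fg_iso_tree_times_cycles:
  assumes "fg_iso (P, p) ({0..<M} \<times> {0..<L}, map_prod id (\<lambda>i. Suc i mod L))" and "0 < L"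
  shows "fg_iso (tree_verts s \<times> P, map_prod tree_par p)
                ({0..<M} \<times> cyc_tree_verts L s, map_prod id (cyc_tree_map L))"
proof -
  have "fg_iso (tree_verts s \<times> P, map_prod tree_par p)
      (tree_verts s \<times> ({0..<M} \<times> {0..<L}), map_prod tree_par (map_prod id (\<lambda>i. Suc i mod L)))"
    using fg_iso_refl assms(1) by (rule fg_iso_times)
  also have "fg_iso \<dots> ({0..<M} \<times> (tree_verts s \<times> {0..<L}),
      map_prod id (map_prod tree_par (\<lambda>i. Suc i mod L)))"
    by (rule fg_iso_prod_left_commute)
  also have "fg_iso \<dots> ({0..<M} \<times> cyc_tree_verts L s, map_prod id (cyc_tree_map L))"
    using fg_iso_refl fg_iso_tree_times_cycle[OF \<open>0 < L\<close>] by (rule fg_iso_times)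
  finally show ?thesis .
qed

section \<open>The affine map \<open>(T, V) \<mapsto> (1 + 2V, T + V)\<close> on \<open>(\<int>/m)\<^sup>2\<close>\<close>

definition torus_map :: "int \<Rightarrow> int \<times> int \<Rightarrow> int \<times> int" where
  "torus_map m = (\<lambda>(T, V). ((1 + 2 * V) mod m, (T + V) mod m))"

abbreviation grid :: "int \<Rightarrow> (int \<times> int) set" where
  "grid m \<equiv> {0..<m} \<times> {0..<m}"

lemma torus_map_in_grid: "0 < m \<Longrightarrow> torus_map m X \<in> grid m"
  by (auto simp: torus_map_def split: prod.split)

lemma mod_add_mult_mod: "(c + k * (x mod m)) mod m = (c + k * x) mod (m :: int)"
  by (metis mod_add_right_eq mod_mult_right_eq)

lemma mod_add_add_mult_mod:
  "(x + y mod m + k * (z mod m)) mod m = (x + y + k * z) mod (m :: int)"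
proof -
  have "[x + y mod m + k * (z mod m) = x + y + k * z] (mod m)"
    by (intro cong_add cong_mult cong_refl) (simp_all add: cong_def)
  then show ?thesis
    by (simp add: cong_def)
qed

lemma mod_coprime_mult_inj:
  fixes x y a b :: int
  assumes "coprime a b" and "x \<in> {0..<a * b}" and "y \<in> {0..<a * b}"
    and "x mod a = y mod a" and "x mod b = y mod b"
  shows "x = y"
proof -
  have "[x = y] (mod a * b)"
    using assms by (intro coprime_cong_mult) (auto simp: cong_def)
  with assms(2,3) show ?thesis
    by (simp add: cong_def)
qed

lemma fg_iso_torus_map_coprime_mult:
  fixes a b :: int
  assumes "0 < a" and "0 < b" and "coprime a b"
  shows "fg_iso (grid (a * b), torus_map (a * b))
                (grid a \<times> grid b, map_prod (torus_map a) (torus_map b))"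
proof (rule fg_isoI)
  let ?h = "\<lambda>(T, V). ((T mod a, V mod a), (T mod b, V mod b))"
  have "inj_on ?h (grid (a * b))"
    using mod_coprime_mult_inj[OF assms(3)] by (auto simp: inj_on_def)
  then show "bij_betw ?h (grid (a * b)) (grid a \<times> grid b)"
    using assms by (intro inj_on_card_imp_bij_betw)
      (auto simp: card_cartesian_product nat_mult_distrib)
  show "?h (torus_map (a * b) X) = map_prod (torus_map a) (torus_map b) (?h X)" for X
    by (cases X) (simp add: torus_map_def mod_mod_cancel mod_simps mod_add_mult_mod)
qed

text \<open>In the coordinates \<open>R = 1 + T + 2V\<close> and \<open>Q = T - V\<close> the map becomes \<open>R \<mapsto> 2R\<close>,
  \<open>Q \<mapsto> 1 - Q\<close>; the change of coordinates is invertible because \<open>R - Q = 1 + 3V\<close>.\<close>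

lemma inj_on_doubling_reflection_coordinates:
  fixes m :: int
  assumes "coprime 3 m"
  shows "inj_on (\<lambda>(T, V). ((1 + T + 2 * V) mod m, (T - V) mod m)) (grid m)"
proof (rule inj_onI)
  fix X X' assume "X \<in> grid m" "X' \<in> grid m"
    and eq: "(\<lambda>(T, V). ((1 + T + 2 * V) mod m, (T - V) mod m)) X =
      (\<lambda>(T, V). ((1 + T + 2 * V) mod m, (T - V) mod m)) X'"
  then obtain T V T' V' where X: "X = (T, V)" "X' = (T', V')"
    and range: "(T, V) \<in> grid m" "(T', V') \<in> grid m"
    by fastforce
  from eq have R: "[1 + T + 2 * V = 1 + T' + 2 * V'] (mod m)" and Q: "[T - V = T' - V'] (mod m)"
    unfolding X by (auto simp: cong_def)
  from cong_diff[OF R Q] have "[3 * V = 3 * V'] (mod m)"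
    by (simp add: cong_add_lcancel algebra_simps)
  then have "[V = V'] (mod m)"
    using assms by (simp add: cong_mult_lcancel)
  then have "V = V'"
    using range by (simp add: cong_def)
  with Q have "m dvd T - T'"
    by (simp add: cong_iff_dvd_diff)
  then have "T mod m = T' mod m"
    by (simp add: mod_eq_dvd_iff)
  with range \<open>V = V'\<close> show "X = X'"
    by (simp add: X)
qed

lemma fg_iso_torus_map_doubling_reflection:
  fixes m :: int
  assumes "0 < m" and "coprime 3 m"
  shows "fg_iso (grid m, torus_map m) (grid m, map_prod (\<lambda>R. 2 * R mod m) (\<lambda>Q. (1 - Q) mod m))"
proof (rule fg_isoI)
  let ?h = "\<lambda>(T, V). ((1 + T + 2 * V) mod m, (T - V) mod m)"
  show "bij_betw ?h (grid m) (grid m)"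
    using assms inj_on_doubling_reflection_coordinates by (intro inj_on_card_imp_bij_betw) auto
  show "?h (torus_map m X) = map_prod (\<lambda>R. 2 * R mod m) (\<lambda>Q. (1 - Q) mod m) (?h X)" for X
  proof (cases X)
    case (Pair T V)
    have "(1 + (1 + 2 * V) mod m + 2 * ((T + V) mod m)) mod m = 2 * ((1 + T + 2 * V) mod m) mod m"
      unfolding mod_add_add_mult_mod mod_mult_right_eq by (simp add: algebra_simps)
    moreover have "((1 + 2 * V) mod m - (T + V) mod m) mod m = (1 - (T - V) mod m) mod m"
      unfolding mod_diff_left_eq mod_diff_right_eq by (simp add: algebra_simps)
    ultimately show ?thesis
      by (simp add: Pair torus_map_def)
  qed
qed

text \<open>The map doubles \<open>1 + T + 2V\<close> modulo \<open>r\<close>, so for odd \<open>r\<close> the additive order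
  \<open>r / gcd (1 + T + 2V) r\<close> of this residue is invariant; it determines the exact period.\<close>

definition torus_level :: "int \<Rightarrow> int \<times> int \<Rightarrow> nat" where
  "torus_level r = (\<lambda>(T, V). nat (r div gcd (1 + T + 2 * V) r))"

lemma torus_level_torus_map:
  assumes "odd r"
  shows "torus_level r (torus_map r X) = torus_level r X"
proof (cases X)
  case (Pair T V)
  have "r \<noteq> 0"
    using assms by auto
  then have "gcd (1 + (1 + 2 * V) mod r + 2 * ((T + V) mod r)) r
      = gcd ((1 + (1 + 2 * V) mod r + 2 * ((T + V) mod r)) mod r) r"
    by (simp add: gcd_mod_left)
  also have "\<dots> = gcd ((2 * (1 + T + 2 * V)) mod r) r"
    unfolding mod_add_add_mult_mod by (simp add: algebra_simps)
  also have "\<dots> = gcd (2 * (1 + T + 2 * V)) r"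
    using \<open>r \<noteq> 0\<close> by (rule gcd_mod_left)
  also have "\<dots> = gcd (1 + T + 2 * V) r"
    using assms by (intro gcd_mult_left_left_cancel) simp
  finally show ?thesis
    by (simp add: Pair torus_level_def torus_map_def)
qed

lemma torus_level_dvd:
  assumes "0 < r"
  shows "torus_level r X dvd nat r"
proof (cases X)
  case (Pair T V)
  have "r div gcd (1 + T + 2 * V) r dvd r" and "0 \<le> r div gcd (1 + T + 2 * V) r"
    using assms by (simp_all add: div_dvd_iff_mult pos_imp_zdiv_nonneg_iff)
  then show ?thesis
    using assms by (simp add: Pair torus_level_def nat_dvd_iff)
qed

lemma torus_map_twice:
  "torus_map m (torus_map m (T, V)) = ((T + (1 + T + 2 * V)) mod m, (V + (1 + T + 2 * V)) mod m)"
  unfolding torus_map_def prod.case mod_add_mult_mod mod_add_eq by (simp add: algebra_simps)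

lemma funpow_torus_map_even:
  assumes "(T, V) \<in> grid m"
  shows "(torus_map m ^^ (2 * j)) (T, V) =
    ((T + (1 + T + 2 * V) * (\<Sum>i<j. 4 ^ i)) mod m, (V + (1 + T + 2 * V) * (\<Sum>i<j. 4 ^ i)) mod m)"
proof (induction j)
  case (Suc j)
  define R where "R = 1 + T + 2 * V"
  define e where "e = (\<Sum>i<j. 4 ^ i :: int)"
  define T' V' where "T' = (T + R * e) mod m" and "V' = (V + R * e) mod m"
  have four: "4 ^ j = 1 + 3 * e"
    using power_diff_1_eq[of "4 :: int" j] by (simp add: e_def)
  have "[T' + (1 + T' + 2 * V') = (T + R * e) + (1 + (T + R * e) + 2 * (V + R * e))] (mod m)"
    unfolding T'_def V'_def by (intro cong_add cong_mult cong_refl) (simp_all add: cong_def)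
  also have "(T + R * e) + (1 + (T + R * e) + 2 * (V + R * e)) = T + R * (e + 4 ^ j)"
    by (simp add: four R_def algebra_simps)
  finally have 1: "(T' + (1 + T' + 2 * V')) mod m = (T + R * (e + 4 ^ j)) mod m"
    by (simp add: cong_def)
  have "[V' + (1 + T' + 2 * V') = (V + R * e) + (1 + (T + R * e) + 2 * (V + R * e))] (mod m)"
    unfolding T'_def V'_def by (intro cong_add cong_mult cong_refl) (simp_all add: cong_def)
  also have "(V + R * e) + (1 + (T + R * e) + 2 * (V + R * e)) = V + R * (e + 4 ^ j)"
    by (simp add: four R_def algebra_simps)
  finally have 2: "(V' + (1 + T' + 2 * V')) mod m = (V + R * (e + 4 ^ j)) mod m"
    by (simp add: cong_def)
  have "(torus_map m ^^ (2 * Suc j)) (T, V) = torus_map m (torus_map m (T', V'))"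
    using Suc.IH by (simp add: T'_def V'_def R_def e_def)
  also have "\<dots> = ((T + R * (e + 4 ^ j)) mod m, (V + R * (e + 4 ^ j)) mod m)"
    unfolding torus_map_twice 1 2 ..
  finally show ?case
    by (simp add: R_def e_def)
qed (use assms in simp)

lemma mod_add_eq_self_iff:
  fixes T x m :: int
  assumes "0 \<le> T" and "T < m"
  shows "(T + x) mod m = T \<longleftrightarrow> m dvd x"
proof -
  have "(T + x) mod m = T \<longleftrightarrow> (T + x) mod m = T mod m"
    using assms by simp
  also have "\<dots> \<longleftrightarrow> m dvd x"
    by (simp add: mod_eq_dvd_iff)
  finally show ?thesis .
qed

lemma dvd_mult_iff_div_gcd_dvd:
  fixes m R e :: int
  assumes "0 < m"
  shows "m dvd R * e \<longleftrightarrow> m div gcd R m dvd e"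
proof -
  define g where "g = gcd R m"
  have "0 < g"
    using assms by (simp add: g_def)
  have R: "R = g * (R div g)" and m: "m = g * (m div g)"
    by (simp_all add: g_def)
  have "coprime (R div g) (m div g)"
    using assms unfolding g_def by (intro div_gcd_coprime) auto
  have "m dvd R * e \<longleftrightarrow> g * (m div g) dvd g * (R div g * e)"
    by (subst R, subst m) (simp add: mult.assoc)
  also have "\<dots> \<longleftrightarrow> m div g dvd R div g * e"
    using \<open>0 < g\<close> by simp
  also have "\<dots> \<longleftrightarrow> m div g dvd e"
    using \<open>coprime (R div g) (m div g)\<close> by (simp add: coprime_dvd_mult_right_iff coprime_commute)
  finally show ?thesis
    by (simp add: g_def)
qed

lemma dvd_four_power_minus_one_iff_ord:
  "int (3 * d) dvd 4 ^ j - 1 \<longleftrightarrow> ord (3 * d) 4 dvd j"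
proof -
  have "int (3 * d) dvd 4 ^ j - 1 \<longleftrightarrow> [int (4 ^ j) = int 1] (mod int (3 * d))"
    by (simp add: cong_iff_dvd_diff)
  also have "\<dots> \<longleftrightarrow> [4 ^ j = 1] (mod 3 * d)"
    by (rule cong_int_iff)
  also have "\<dots> \<longleftrightarrow> ord (3 * d) 4 dvd j"
    by (rule ord_divides)
  finally show ?thesis .
qed

lemma funpow_torus_map_even_eq_self_iff:
  assumes "0 < r" and "(T, V) \<in> grid r"
  shows "(torus_map r ^^ (2 * j)) (T, V) = (T, V) \<longleftrightarrow> ord (3 * torus_level r (T, V)) 4 dvd j"
proof -
  let ?R = "1 + T + 2 * V"
  have "(torus_map r ^^ (2 * j)) (T, V) = (T, V) \<longleftrightarrow> r dvd ?R * (\<Sum>i<j. 4 ^ i)"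
    using assms by (simp add: funpow_torus_map_even mod_add_eq_self_iff)
  also have "\<dots> \<longleftrightarrow> 3 * (r div gcd ?R r) dvd 3 * (\<Sum>i<j. 4 ^ i)"
    using assms by (simp add: dvd_mult_iff_div_gcd_dvd)
  also have "\<dots> \<longleftrightarrow> int (3 * torus_level r (T, V)) dvd 4 ^ j - 1"
    using assms power_diff_1_eq[of "4 :: int" j]
    by (simp add: torus_level_def pos_imp_zdiv_nonneg_iff)
  also have "\<dots> \<longleftrightarrow> ord (3 * torus_level r (T, V)) 4 dvd j"
    by (rule dvd_four_power_minus_one_iff_ord)
  finally show ?thesis .
qed

lemma funpow_map_prod:
  fixes f :: "'a \<Rightarrow> 'a" and g :: "'b \<Rightarrow> 'b"
  shows "(map_prod f g ^^ n) (a, b) = ((f ^^ n) a, (g ^^ n) b)"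
  by (induction n) simp_all

lemma funpow_one_minus_mod:
  fixes m Q :: int
  assumes "0 \<le> Q" and "Q < m"
  shows "((\<lambda>Q. (1 - Q) mod m) ^^ k) Q = (if even k then Q else (1 - Q) mod m)"
proof (induction k)
  case (Suc k)
  have "(1 - (1 - Q) mod m) mod m = Q"
    using assms by (simp add: mod_diff_right_eq)
  with Suc show ?case by simp
qed simp

lemma one_minus_mod_ne_self:
  fixes m Q :: int
  assumes "even m" and "0 \<le> Q" and "Q < m"
  shows "(1 - Q) mod m \<noteq> Q"
proof
  assume "(1 - Q) mod m = Q"
  with assms have "(1 - Q) mod m = Q mod m"
    by simp
  then have "m dvd (1 - Q) - Q"
    by (simp only: mod_eq_dvd_iff)
  with \<open>even m\<close> have "2 dvd (1 - Q) - Q"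
    by (rule dvd_trans)
  then show False by presburger
qed

lemma funpow_reflection_torus_map_eq_self_iff:
  fixes m r :: int
  assumes "even m" and "0 < r" and "(Q, T, V) \<in> {0..<m} \<times> grid r"
  shows "(map_prod (\<lambda>Q. (1 - Q) mod m) (torus_map r) ^^ k) (Q, T, V) = (Q, T, V) \<longleftrightarrow>
    2 * ord (3 * torus_level r (T, V)) 4 dvd k"
proof (cases "even k")
  case True
  then obtain j where "k = 2 * j" ..
  with assms show ?thesis
    by (simp add: funpow_map_prod funpow_one_minus_mod funpow_torus_map_even_eq_self_iff)
next
  case False
  with assms one_minus_mod_ne_self[of m Q] show ?thesis
    by (auto simp: funpow_map_prod funpow_one_minus_mod dest: dvd_mult_left)
qed

lemma card_gcd_atLeastLessThan_eq_greaterThanAtMost: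
  fixes n :: nat
  assumes "0 < n"
  shows "card {k \<in> {0..<n}. P (gcd k n)} = card {k \<in> {0<..n}. P (gcd k n)}"
  by (rule bij_betw_same_card[of "\<lambda>k. if k = 0 then n else k"],
      rule bij_betwI[where g = "\<lambda>k. if k = n then 0 else k"]) (use assms in auto)

lemma card_div_gcd_eq_totient:
  fixes n d :: nat
  assumes "0 < n" and "d dvd n"
  shows "card {k \<in> {0..<n}. n div gcd k n = d} = totient d"
proof -
  have "n div g = d \<longleftrightarrow> g = n div d" if "g dvd n" for g
    using assms that by (auto elim!: dvdE)
  then have "{k \<in> {0<..n}. n div gcd k n = d} = {k \<in> {0<..n}. gcd k n = n div d}"
    by auto
  moreover have "n div (n div d) = d" and "n div d dvd n"
    using assms by (auto elim!: dvdE)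
  ultimately show ?thesis
    using card_gcd_atLeastLessThan_eq_greaterThanAtMost[OF assms(1), of "\<lambda>g. n div g = d"]
      card_gcd_eq_totient[OF assms(1), of "n div d"] assms
    by (simp add: div_dvd_iff_mult)
qed

lemma card_torus_level:
  fixes r d :: nat
  assumes "0 < r" and "d dvd r"
  shows "card {X \<in> grid (int r). torus_level (int r) X = d} = r * totient d"
proof -
  define S where "S = {R \<in> {0..<int r}. nat (int r div gcd R (int r)) = d}"
  have key: "nat (int r div gcd (int k) (int r)) = r div gcd k r" for k
    by (simp add: gcd_int_int_eq flip: zdiv_int)
  have "S = int ` {k \<in> {0..<r}. r div gcd k r = d}"
  proof (intro equalityI subsetI)
    fix R assume R: "R \<in> S"
    then obtain k where "R = int k"
      using zero_le_imp_eq_int by (auto simp: S_def)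
    with R key[of k] show "R \<in> int ` {k \<in> {0..<r}. r div gcd k r = d}"
      by (auto simp: S_def)
  qed (use key in \<open>auto simp: S_def\<close>)
  then have S: "card S = totient d"
    using card_div_gcd_eq_totient[OF assms] by (simp add: card_image)
  have shift: "T + (1 + 2 * V) = 1 + T + 2 * V" for T V :: int
    by simp
  have level: "torus_level (int r) (T, V) = nat (int r div gcd ((T + (1 + 2 * V)) mod int r) (int r))"
    for T V
    using assms by (simp add: torus_level_def gcd_mod_left shift)
  have "bij_betw (\<lambda>(T, V). ((T + (1 + 2 * V)) mod int r, V))
      {X \<in> grid (int r). torus_level (int r) X = d} (S \<times> {0..<int r})"
    by (rule bij_betwI[where g = "\<lambda>(R, V). ((R - (1 + 2 * V)) mod int r, V)"])
      (use assms in \<open>auto simp: S_def level mod_diff_left_eq mod_add_left_eq\<close>)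
  then show ?thesis
    using S by (simp add: bij_betw_same_card card_cartesian_product)
qed

lemma cyc_len_pos:
  assumes "odd d"
  shows "0 < cyc_len d"
proof -
  have "coprime (3 * d) (2 ^ 2)"
    using assms by (simp only: coprime_power_right_iff) simp
  then show ?thesis
    by (simp add: cyc_len_def ord_eq_0)
qed

lemma fg_iso_reflection_torus_map_level:
  fixes r s d :: nat
  assumes "odd r" and "0 < s" and "d dvd r"
  defines "m \<equiv> (2 :: int) ^ s"
  shows "fg_iso ({c \<in> {0..<m} \<times> grid (int r). torus_level (int r) (snd c) = d},
                 map_prod (\<lambda>Q. (1 - Q) mod m) (torus_map (int r)))
           ({0..<totient d * (2 ^ s * r) div cyc_len d} \<times> {0..<cyc_len d},
            map_prod id (\<lambda>i. Suc i mod cyc_len d))"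
proof -
  let ?P = "{c \<in> {0..<m} \<times> grid (int r). torus_level (int r) (snd c) = d}"
  let ?p = "map_prod (\<lambda>Q. (1 - Q) mod m) (torus_map (int r))"
  have "0 < r" and "0 < m" and "even m" and "odd d"
    using assms by (auto simp: m_def intro!: Nat.gr0I elim: dvd_trans)
  have "?P = {0..<m} \<times> {X \<in> grid (int r). torus_level (int r) X = d}"
    by auto
  then have card: "card ?P = totient d * (2 ^ s * r)"
    using card_torus_level \<open>0 < r\<close> \<open>d dvd r\<close> by (simp add: card_cartesian_product m_def nat_power_eq)
  have "fg_iso (?P, ?p) ({0..<card ?P div cyc_len d} \<times> {0..<cyc_len d},
      map_prod id (\<lambda>i. Suc i mod cyc_len d))"
  proof (rule fg_iso_uniform_period)
    show "finite ?P" and "0 < cyc_len d"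
      using cyc_len_pos[OF \<open>odd d\<close>] by simp_all
    show "?p c \<in> ?P" if "c \<in> ?P" for c
      using that \<open>0 < r\<close> \<open>0 < m\<close> \<open>odd r\<close> torus_map_in_grid torus_level_torus_map[of "int r"]
      by (auto split: prod.split)
    show "(?p ^^ k) c = c \<longleftrightarrow> cyc_len d dvd k" if "c \<in> ?P" for c k
      using that funpow_reflection_torus_map_eq_self_iff[OF \<open>even m\<close>, of "int r"] \<open>0 < r\<close>
      by (auto simp: cyc_len_def)
  qed
  then show ?thesis
    unfolding card .
qed

lemma fg_iso_tree_times_reflection_torus_map:
  fixes r s :: nat
  assumes "odd r" and "0 < s"
  defines "m \<equiv> (2 :: int) ^ s"
  shows "fg_iso (tree_verts s \<times> ({0..<m} \<times> grid (int r)),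
                 map_prod tree_par (map_prod (\<lambda>Q. (1 - Q) mod m) (torus_map (int r))))
           (Sigma {d. d dvd r} (\<lambda>d. {0..<totient d * (2 ^ s * r) div cyc_len d} \<times> cyc_tree_verts (cyc_len d) s),
            \<lambda>(d, w). (d, map_prod id (cyc_tree_map (cyc_len d)) w))"
proof (rule fg_iso_Sigma[where \<pi> = "\<lambda>(t, Q, X). torus_level (int r) X"])
  let ?C = "{0..<m} \<times> grid (int r)"
  let ?p = "map_prod (\<lambda>Q. (1 - Q) mod m) (torus_map (int r))"
  have "0 < r" and "0 < m"
    using assms by (auto simp: m_def intro!: Nat.gr0I)
  show "map_prod tree_par ?p x \<in> tree_verts s \<times> ?C" if "x \<in> tree_verts s \<times> ?C" for x
    using that \<open>0 < r\<close> \<open>0 < m\<close> torus_map_in_grid tree_par_in_tree_verts by auto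
  show "(\<lambda>(t, Q, X). torus_level (int r) X) x \<in> {d. d dvd r}" for x
    using torus_level_dvd[of "int r"] \<open>0 < r\<close> by (auto split: prod.split)
  show "(\<lambda>(t, Q, X). torus_level (int r) X) (map_prod tree_par ?p x) =
      (\<lambda>(t, Q, X). torus_level (int r) X) x" for x
    using torus_level_torus_map[of "int r"] \<open>odd r\<close> by (auto split: prod.split)
  fix d assume "d \<in> {d. d dvd r}"
  then have "odd d"
    using \<open>odd r\<close> by (auto elim: dvd_trans)
  have "{x \<in> tree_verts s \<times> ?C. (\<lambda>(t, Q, X). torus_level (int r) X) x = d} =
      tree_verts s \<times> {c \<in> ?C. torus_level (int r) (snd c) = d}"
    by auto
  then show "fg_iso ({x \<in> tree_verts s \<times> ?C. (\<lambda>(t, Q, X). torus_level (int r) X) x = d},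
      map_prod tree_par ?p)
    ({0..<totient d * (2 ^ s * r) div cyc_len d} \<times> cyc_tree_verts (cyc_len d) s,
      map_prod id (cyc_tree_map (cyc_len d)))"
    using fg_iso_reflection_torus_map_level[OF \<open>odd r\<close> \<open>0 < s\<close>] \<open>d \<in> {d. d dvd r}\<close>
      cyc_len_pos[OF \<open>odd d\<close>]
    by (simp add: m_def fg_iso_tree_times_cycles)
qed

lemma fg_iso_torus_map:
  fixes q r s :: nat
  assumes q: "q - 1 = 2 ^ s * r" and "0 < s" and "odd r"
  shows "fg_iso (grid (int (q - 1)), torus_map (int (q - 1)))
           (Sigma {d. d dvd r} (\<lambda>d. {0..<mult_d q d} \<times> cyc_tree_verts (cyc_len d) s),
            \<lambda>(d, w). (d, map_prod id (cyc_tree_map (cyc_len d)) w))"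
proof -
  define m where "m = (2 :: int) ^ s"
  have "0 < m" and "0 < int r"
    using \<open>odd r\<close> by (auto simp: m_def intro!: Nat.gr0I)
  have "coprime m (int r)" and "coprime 3 m"
    using \<open>odd r\<close> by (simp_all add: m_def coprime_power_left_iff coprime_power_right_iff)
  have n: "int (q - 1) = m * int r"
    using q by (simp add: m_def)
  have M: "mult_d q d = totient d * (2 ^ s * r) div cyc_len d" for d
    unfolding mult_d_def cyc_len_def q ..
  have "fg_iso (grid (m * int r), torus_map (m * int r))
      (grid m \<times> grid (int r), map_prod (torus_map m) (torus_map (int r)))"
    using \<open>0 < m\<close> \<open>0 < int r\<close> \<open>coprime m (int r)\<close> by (rule fg_iso_torus_map_coprime_mult)
  also have "fg_iso \<dots> (grid m \<times> grid (int r),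
      map_prod (map_prod (\<lambda>R. 2 * R mod m) (\<lambda>Q. (1 - Q) mod m)) (torus_map (int r)))"
    using \<open>0 < m\<close> \<open>coprime 3 m\<close> by (intro fg_iso_times fg_iso_torus_map_doubling_reflection fg_iso_refl)
  also have "fg_iso \<dots> ({0..<m} \<times> ({0..<m} \<times> grid (int r)),
      map_prod (\<lambda>R. 2 * R mod m) (map_prod (\<lambda>Q. (1 - Q) mod m) (torus_map (int r))))"
    by (rule fg_iso_prod_assoc)
  also have "fg_iso \<dots> (tree_verts s \<times> ({0..<m} \<times> grid (int r)),
      map_prod tree_par (map_prod (\<lambda>Q. (1 - Q) mod m) (torus_map (int r))))"
    unfolding m_def by (intro fg_iso_times fg_iso_doubling_tree_verts fg_iso_refl)
  also have "fg_iso \<dots> (Sigma {d. d dvd r} (\<lambda>d. {0..<mult_d q d} \<times> cyc_tree_verts (cyc_len d) s),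
      \<lambda>(d, w). (d, map_prod id (cyc_tree_map (cyc_len d)) w))"
    unfolding M m_def using \<open>odd r\<close> \<open>0 < s\<close> by (rule fg_iso_tree_times_reflection_torus_map)
  finally show ?thesis
    unfolding n .
qed

section \<open>Finite fields\<close>

lemma field_cring_class_ops: "field (cring_class_ops :: 'a :: field ring)"
proof (rule cring.cring_fieldI[OF cring_class], intro equalityI subsetI)
  fix x :: 'a
  assume "x \<in> Units cring_class_ops"
  then show "x \<in> carrier cring_class_ops - {\<zero>\<^bsub>cring_class_ops\<^esub>}"
    by (auto simp: Units_def cring_class_ops_def)
next
  fix x :: 'a
  assume "x \<in> carrier cring_class_ops - {\<zero>\<^bsub>cring_class_ops\<^esub>}"
  then have "x \<noteq> 0"
    by (simp add: cring_class_ops_def)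
  then show "x \<in> Units cring_class_ops"
    unfolding Units_def cring_class_ops_def by (auto intro!: exI[of _ "inverse x"])
qed

lemma (in group) ord_eq_order_if_generates:
  assumes "finite (carrier G)" and "a \<in> carrier G"
    and "carrier G = {a [^] (i :: nat) | i. i \<in> UNIV}"
  shows "ord a = order G"
proof (rule antisym)
  show "ord a \<le> order G"
    using ord_le_group_order assms(1,2) .
  have "carrier G = (\<lambda>i. a [^] i) ` {0..ord a - 1}"
    using ord_elems[OF assms(1,2)] assms(3) unfolding Setcompr_eq_image by (simp only:)
  then have "order G \<le> card {0..ord a - 1}"
    unfolding order_def using card_image_le[of "{0..ord a - 1}" "\<lambda>i. a [^] i"] by simp
  also have "\<dots> = ord a"
    using ord_ge_1[OF assms(1,2)] by simp
  finally show "order G \<le> ord a" .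
qed

lemma finite_field_generator:
  obtains \<gamma> :: "'a :: {field, finite}"
  where "\<And>x. x \<noteq> 0 \<Longrightarrow> \<exists>i. x = \<gamma> ^ i"
    and "\<And>i. \<gamma> ^ i = 1 \<longleftrightarrow> (card (UNIV :: 'a set) - 1) dvd i"
proof -
  let ?R = "cring_class_ops :: 'a ring"
  let ?G = "mult_of ?R"
  interpret G: group ?G
    using field_cring_class_ops by (rule field.field_mult_group)
  have fin: "finite (carrier ?R)"
    by simp
  have pow: "x [^]\<^bsub>?G\<^esub> i = x ^ i" for x :: 'a and i :: nat
    by (simp add: nat_pow_mult_of power_class)
  obtain a where a: "a \<in> carrier ?G" and gen: "carrier ?G = {a [^]\<^bsub>?G\<^esub> (i :: nat) | i. i \<in> UNIV}"
    using field.finite_field_mult_group_has_gen[OF field_cring_class_ops fin]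
    by (auto simp: nat_pow_mult_of)
  have "G.ord a = card (UNIV :: 'a set) - 1"
    using G.ord_eq_order_if_generates[OF _ a gen] field.order_mult_of[OF field_cring_class_ops fin]
    by (simp add: order_def cring_class_ops_def)
  show ?thesis
  proof (rule that[of a])
    fix x :: 'a assume "x \<noteq> 0"
    then have "x \<in> carrier ?G"
      by (simp add: cring_class_ops_def)
    then show "\<exists>i. x = a ^ i"
      unfolding gen by (auto simp: pow)
  next
    show "a ^ i = 1 \<longleftrightarrow> (card (UNIV :: 'a set) - 1) dvd i" for i
      using G.pow_eq_id[OF a, of i] \<open>G.ord a = card (UNIV :: 'a set) - 1\<close> by (simp add: pow one_class)
  qed
qed

lemma finite_field_frobenius_add:
  fixes x y :: "'a :: {field, finite}"
  assumes "prime p" and "card (UNIV :: 'a set) = p ^ m"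
  shows "(x + y) ^ (p ^ k) = x ^ (p ^ k) + y ^ (p ^ k)"
proof -
  have "prime CHAR('a)"
    using finite_imp_CHAR_pos[where 'a = 'a] by (simp add: prime_CHAR_semidom)
  moreover from this have "CHAR('a) = p"
    using CHAR_dvd_CARD[where 'a = 'a] assms by (metis prime_dvd_power primes_dvd_imp_eq)
  ultimately show ?thesis
    by (intro freshmans_dream') simp_all
qed

section \<open>The map in coordinates over \<open>\<bbbF>\<^sub>q\<close>\<close>

locale quadratic_extension =
  fixes q :: nat and \<gamma> :: "'a :: {field, finite}"
  assumes odd_q: "odd q" and q_gt_1: "1 < q"
    and frobenius_add: "\<And>x y :: 'a. (x + y) ^ q = x ^ q + y ^ q"
    and gamma_generates: "\<And>x. x \<noteq> 0 \<Longrightarrow> \<exists>i. x = \<gamma> ^ i"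
    and gamma_power_eq_1_iff: "\<And>i. \<gamma> ^ i = 1 \<longleftrightarrow> (q\<^sup>2 - 1) dvd i"
begin

definition half :: nat where "half = (q - 1) div 2"

lemma q_minus_1_eq: "q - 1 = 2 * half"
  using odd_q q_gt_1 by (simp add: half_def)

lemma half_pos: "0 < half"
  using odd_q q_gt_1 q_minus_1_eq by presburger

lemma q_plus_1_div_2: "(q + 1) div 2 = half + 1"
  using q_minus_1_eq q_gt_1 by linarith

lemma q_plus_1_eq: "q + 1 = (half + 1) * 2"
  using q_minus_1_eq q_gt_1 by presburger

lemma q_squared_minus_1: "q\<^sup>2 - 1 = (q + 1) * (q - 1)"
  using q_gt_1 by (cases q) (simp_all add: power2_eq_square algebra_simps)

lemma q_squared_minus_1_half: "q\<^sup>2 - 1 = (half + 1) * (2 * half) * 2"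
  unfolding q_squared_minus_1 q_plus_1_eq q_minus_1_eq by simp

lemma power_q_squared: "(x :: 'a) ^ q\<^sup>2 = x"
proof (cases "x = 0")
  case False
  then obtain i where x: "x = \<gamma> ^ i"
    using gamma_generates by blast
  have "x ^ q\<^sup>2 = x * x ^ (q\<^sup>2 - 1)"
    using q_gt_1 by (simp add: power_eq_if)
  also have "x ^ (q\<^sup>2 - 1) = \<gamma> ^ (i * (q\<^sup>2 - 1))"
    unfolding x by (simp add: power_mult)
  also have "\<dots> = 1"
    using gamma_power_eq_1_iff by simp
  finally show ?thesis
    by simp
qed (use q_gt_1 in simp)

lemma frobenius_frobenius: "((x :: 'a) ^ q) ^ q = x"
  using power_q_squared[of x] by (simp add: power_mult[symmetric] power2_eq_square)

lemma frobenius_minus: "(- (x :: 'a)) ^ q = - (x ^ q)"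
  using odd_q by (simp add: power_minus_odd)

lemma frobenius_diff: "((x :: 'a) - y) ^ q = x ^ q - y ^ q"
  using frobenius_add[of x "- y"] frobenius_minus[of y] by simp

definition g :: 'a where "g = \<gamma> ^ (q + 1)"

definition \<omega> :: 'a where "\<omega> = \<gamma> ^ ((q + 1) div 2)"

lemma omega_power_q_minus_1_gamma: "\<omega> ^ (q - 1) = \<gamma> ^ ((half + 1) * (2 * half))"
  by (simp only: \<omega>_def q_plus_1_div_2 q_minus_1_eq power_mult)

lemma gamma_nonzero: "\<gamma> \<noteq> 0"
proof
  assume "\<gamma> = 0"
  moreover have "\<gamma> ^ (q\<^sup>2 - 1) = 1"
    using gamma_power_eq_1_iff by simp
  moreover have "0 < q\<^sup>2 - 1"
    unfolding q_squared_minus_1_half using half_pos by simp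
  ultimately show False
    by (simp add: power_0_left)
qed

lemma omega_power_q_minus_1_ne_1: "\<omega> ^ (q - 1) \<noteq> 1"
proof
  assume "\<omega> ^ (q - 1) = 1"
  then have "(half + 1) * (2 * half) * 2 dvd (half + 1) * (2 * half)"
    unfolding omega_power_q_minus_1_gamma gamma_power_eq_1_iff q_squared_minus_1_half .
  moreover have "0 < (half + 1) * (2 * half)"
    using half_pos by simp
  ultimately show False
    by (auto dest!: dvd_imp_le)
qed

lemma omega_power_q_minus_1: "\<omega> ^ (q - 1) = -1"
proof -
  have "(\<omega> ^ (q - 1))\<^sup>2 = \<gamma> ^ (q\<^sup>2 - 1)"
    unfolding omega_power_q_minus_1_gamma q_squared_minus_1_half by (simp only: power_mult)
  then have "(\<omega> ^ (q - 1))\<^sup>2 = 1"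
    by (simp add: gamma_power_eq_1_iff)
  with omega_power_q_minus_1_ne_1 show ?thesis
    by (simp add: power2_eq_1_iff)
qed

lemma two_nonzero: "(2 :: 'a) \<noteq> 0"
proof
  assume "(2 :: 'a) = 0"
  then have "(-1 :: 'a) = 1"
    by (simp add: eq_neg_iff_add_eq_0 one_add_one)
  with omega_power_q_minus_1 omega_power_q_minus_1_ne_1 show False
    by simp
qed

lemma omega_nonzero: "\<omega> \<noteq> 0"
  using gamma_nonzero by (simp add: \<omega>_def)

lemma omega_square: "\<omega>\<^sup>2 = g"
  unfolding \<omega>_def q_plus_1_div_2 unfolding g_def q_plus_1_eq by (simp only: power_mult)

lemma omega_frobenius: "\<omega> ^ q = - \<omega>"
proof -
  have "q = Suc (q - 1)"
    using q_gt_1 by simp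
  then have "\<omega> ^ q = \<omega> * \<omega> ^ (q - 1)"
    by (metis power_Suc)
  then show ?thesis
    by (simp only: omega_power_q_minus_1) simp
qed

lemma g_nonzero: "g \<noteq> 0"
  using gamma_nonzero by (simp add: g_def)

lemma g_power_eq_1_iff: "g ^ i = 1 \<longleftrightarrow> (q - 1) dvd i"
proof -
  have "g ^ i = 1 \<longleftrightarrow> \<gamma> ^ ((q + 1) * i) = 1"
    by (simp only: g_def power_mult)
  also have "\<dots> \<longleftrightarrow> (q + 1) * (q - 1) dvd (q + 1) * i"
    by (simp only: gamma_power_eq_1_iff q_squared_minus_1)
  also have "\<dots> \<longleftrightarrow> (q - 1) dvd i"
    by (simp only: nat_mult_dvd_cancel_disj) simp
  finally show ?thesis .
qed

lemma g_power_q_minus_1: "g ^ (q - 1) = 1"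
  by (simp add: g_power_eq_1_iff)

lemma g_power_mod: "g ^ i = g ^ (i mod (q - 1))"
proof -
  have "g ^ i = g ^ ((q - 1) * (i div (q - 1)) + i mod (q - 1))"
    by simp
  also have "\<dots> = (g ^ (q - 1)) ^ (i div (q - 1)) * g ^ (i mod (q - 1))"
    by (simp only: power_add power_mult)
  finally show ?thesis
    unfolding g_power_q_minus_1 by simp
qed

lemma g_power_inj:
  assumes "i < q - 1" and "j < q - 1" and "g ^ i = g ^ j"
  shows "i = j"
proof -
  have "i = j" if "i \<le> j" "j < q - 1" and eq: "g ^ i = g ^ j" for i j
  proof -
    have "g ^ j = g ^ i * g ^ (j - i)"
      using \<open>i \<le> j\<close> by (simp flip: power_add)
    with eq have "g ^ (j - i) = 1"
      using g_nonzero by simp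
    then have "(q - 1) dvd j - i"
      by (simp add: g_power_eq_1_iff)
    with that show "i = j"
      by (auto dest!: dvd_imp_le)
  qed
  from this[of i j] this[of j i] assms show ?thesis
    by (cases "i \<le> j") auto
qed

definition Fq :: "'a set" where "Fq = {x. x ^ q = x}"

lemma g_power_in_Fq: "g ^ i \<in> Fq"
proof -
  have "(g ^ i) ^ q = g ^ i * (g ^ (q - 1)) ^ i"
    using q_gt_1 by (simp flip: power_mult power_add) (simp add: algebra_simps)
  then show ?thesis
    unfolding Fq_def g_power_q_minus_1 by simp
qed

lemma Fq_nonzero_imp_g_power:
  assumes "x \<in> Fq" and "x \<noteq> 0"
  obtains i where "i < q - 1" and "x = g ^ i"
proof -
  obtain j where x: "x = \<gamma> ^ j"
    using gamma_generates assms(2) by blast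
  have "\<gamma> ^ j * \<gamma> ^ (j * (q - 1)) = \<gamma> ^ (j * q)"
    using q_gt_1 by (simp flip: power_add) (simp add: algebra_simps)
  also have "\<dots> = \<gamma> ^ j * 1"
    using assms(1) by (simp add: Fq_def x power_mult)
  finally have "\<gamma> ^ (j * (q - 1)) = 1"
    using gamma_nonzero by simp
  then have "(q + 1) * (q - 1) dvd j * (q - 1)"
    by (simp only: gamma_power_eq_1_iff q_squared_minus_1)
  then have "q + 1 dvd j"
    using q_gt_1 by (simp only: dvd_times_right_cancel_iff)
  then obtain k where "j = (q + 1) * k"
    by blast
  then have "x = g ^ k"
    unfolding x g_def by (simp only: power_mult)
  then have "x = g ^ (k mod (q - 1))"
    using g_power_mod[of k] by simp
  moreover have "k mod (q - 1) < q - 1"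
    using q_gt_1 by simp
  ultimately show ?thesis
    using that by blast
qed

lemma Fq_zero: "0 \<in> Fq"
  using q_gt_1 by (simp add: Fq_def)

lemma Fq_add: "x \<in> Fq \<Longrightarrow> y \<in> Fq \<Longrightarrow> x + y \<in> Fq"
  by (simp add: Fq_def frobenius_add)

lemma Fq_minus: "x \<in> Fq \<Longrightarrow> - x \<in> Fq"
  by (simp add: Fq_def frobenius_minus)

lemma Fq_mult: "x \<in> Fq \<Longrightarrow> y \<in> Fq \<Longrightarrow> x * y \<in> Fq"
  by (simp add: Fq_def power_mult_distrib)

lemma Fq_divide: "x \<in> Fq \<Longrightarrow> y \<in> Fq \<Longrightarrow> x / y \<in> Fq"
  by (simp add: Fq_def power_divide)

lemma Fq_two: "2 \<in> Fq"
  using Fq_add[of 1 1] by (simp add: Fq_def)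

text \<open>Every element is \<open>t + \<omega> v\<close> with \<open>t, v \<in> \<bbbF>\<^sub>q\<close>, and \<open>\<omega>\<^sup>q = -\<omega>\<close> gives the coordinates
  as analogues of real and imaginary part.\<close>

definition re :: "'a \<Rightarrow> 'a" where "re x = (x + x ^ q) / 2"

definition im :: "'a \<Rightarrow> 'a" where "im x = (x - x ^ q) / (2 * \<omega>)"

lemma re_in_Fq: "re x \<in> Fq"
  using Fq_two by (simp add: Fq_def re_def power_divide frobenius_add frobenius_frobenius add.commute)

lemma im_in_Fq: "im x \<in> Fq"
proof -
  have "(im x) ^ q = (x ^ q - x) / (2 * - \<omega>)"
    using Fq_two by (simp add: Fq_def im_def power_divide frobenius_diff frobenius_frobenius
      power_mult_distrib omega_frobenius)
  also have "\<dots> = im x"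
    unfolding im_def by (simp only: mult_minus_right divide_minus_right minus_divide_left minus_diff_eq)
  finally show ?thesis
    by (simp add: Fq_def)
qed

lemma re_plus_omega_im: "re x + \<omega> * im x = x"
proof -
  have "\<omega> * im x = (x - x ^ q) / 2"
    using omega_nonzero by (simp add: im_def)
  then show ?thesis
    using two_nonzero by (simp add: re_def field_simps)
qed

lemma frobenius_coords:
  assumes "t \<in> Fq" and "v \<in> Fq"
  shows "(t + \<omega> * v) ^ q = t - \<omega> * v"
  using assms by (simp add: Fq_def frobenius_add power_mult_distrib omega_frobenius)

lemma re_coords:
  assumes "t \<in> Fq" and "v \<in> Fq"
  shows "re (t + \<omega> * v) = t"
  unfolding re_def frobenius_coords[OF assms] using two_nonzero by (simp add: field_simps)

lemma im_coords:
  assumes "t \<in> Fq" and "v \<in> Fq"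
  shows "im (t + \<omega> * v) = v"
  unfolding im_def frobenius_coords[OF assms] using two_nonzero omega_nonzero by (simp add: field_simps)

definition coord_map :: "'a \<times> 'a \<Rightarrow> 'a \<times> 'a" where
  "coord_map = (\<lambda>(t, v). (g * v\<^sup>2, t * v))"

lemma map_coords:
  assumes "t \<in> Fq" and "v \<in> Fq"
  shows "c * ((t + \<omega> * v) ^ (q + 1) - (t + \<omega> * v)\<^sup>2) = - 2 * c * g * v\<^sup>2 + \<omega> * (- 2 * c * t * v)"
proof -
  have "(t + \<omega> * v) ^ (q + 1) = (t - \<omega> * v) * (t + \<omega> * v)"
    using frobenius_coords[OF assms] by simp
  then show ?thesis
    unfolding omega_square[symmetric] by (simp only:) (simp add: power2_eq_square algebra_simps)
qed

lemma fg_iso_coords: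
  assumes "c \<in> Fq" and "c \<noteq> 0"
  shows "fg_iso (UNIV, \<lambda>x. c * (x ^ (q + 1) - x\<^sup>2)) (Fq \<times> Fq, coord_map)"
proof (rule fg_isoI)
  define b where "b = - 2 * c"
  have b: "b \<in> Fq" "b \<noteq> 0"
    using assms two_nonzero Fq_two by (simp_all add: b_def Fq_mult Fq_minus)
  let ?h = "\<lambda>x. (b * re x, b * im x)"
  show "bij_betw ?h UNIV (Fq \<times> Fq)"
  proof (rule bij_betwI[where g = "\<lambda>(t, v). t / b + \<omega> * (v / b)"])
    fix y assume "y \<in> Fq \<times> Fq"
    then obtain t v where y: "y = (t, v)" and tv: "t / b \<in> Fq" "v / b \<in> Fq"
      using b by (auto simp: Fq_divide)
    show "?h ((\<lambda>(t, v). t / b + \<omega> * (v / b)) y) = y"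
      unfolding y prod.case re_coords[OF tv] im_coords[OF tv] using b by simp
  next
    fix x
    show "(\<lambda>(t, v). t / b + \<omega> * (v / b)) (?h x) = x"
      using b re_plus_omega_im[of x] by simp
  qed (use b in \<open>auto simp: re_in_Fq im_in_Fq Fq_mult\<close>)
  show "?h (c * (x ^ (q + 1) - x\<^sup>2)) = coord_map (?h x)" for x
  proof -
    define t v where "t = re x" and "v = im x"
    have tv: "t \<in> Fq" "v \<in> Fq" and x: "x = t + \<omega> * v"
      by (simp_all add: t_def v_def re_in_Fq im_in_Fq re_plus_omega_im)
    have Fq: "b * g * v\<^sup>2 \<in> Fq" "b * t * v \<in> Fq"
      using tv b g_power_in_Fq[of 1] by (simp_all add: Fq_mult power2_eq_square)
    have fx: "c * (x ^ (q + 1) - x\<^sup>2) = b * g * v\<^sup>2 + \<omega> * (b * t * v)"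
      unfolding x b_def by (rule map_coords[OF tv])
    show ?thesis
      unfolding fx re_coords[OF Fq] im_coords[OF Fq] coord_map_def
        t_def[symmetric] v_def[symmetric] by (simp add: power2_eq_square)
  qed
qed

definition torus :: "('a \<times> 'a) set" where "torus = (Fq - {0}) \<times> (Fq - {0})"

definition axes :: "('a \<times> 'a) set" where "axes = {(t, v) \<in> Fq \<times> Fq. t = 0 \<or> v = 0}"

lemma coord_map_torus: "x \<in> torus \<Longrightarrow> coord_map x \<in> torus"
  using g_nonzero g_power_in_Fq[of 1]
  by (auto simp: torus_def coord_map_def Fq_mult power2_eq_square)

lemma coord_map_axes: "x \<in> axes \<Longrightarrow> coord_map x \<in> axes"
  using g_power_in_Fq[of 1] Fq_zero
  by (auto simp: axes_def coord_map_def Fq_mult power2_eq_square)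

definition torus_point :: "int \<times> int \<Rightarrow> 'a \<times> 'a" where
  "torus_point = (\<lambda>(T, V). (g ^ nat T, g ^ nat V))"

lemma bij_betw_torus_point: "bij_betw torus_point (grid (int (q - 1))) torus"
proof -
  have "inj_on torus_point (grid (int (q - 1)))"
  proof (rule inj_onI)
    fix X Y assume "X \<in> grid (int (q - 1))" "Y \<in> grid (int (q - 1))"
      and eq: "torus_point X = torus_point Y"
    then obtain T V T' V' where X: "X = (T, V)" "Y = (T', V')"
      and range: "0 \<le> T" "nat T < q - 1" "0 \<le> V" "nat V < q - 1"
        "0 \<le> T'" "nat T' < q - 1" "0 \<le> V'" "nat V' < q - 1"
      by force
    from eq have "nat T = nat T'" and "nat V = nat V'"
      using g_power_inj range by (auto simp: X torus_point_def)
    with range have "T = T'" and "V = V'"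
      by (metis nat_0_le)+
    then show "X = Y"
      by (simp add: X)
  qed
  moreover have "torus_point ` grid (int (q - 1)) = torus"
  proof (intro equalityI subsetI)
    fix y assume "y \<in> torus_point ` grid (int (q - 1))"
    then show "y \<in> torus"
      using g_power_in_Fq g_nonzero by (auto simp: torus_def torus_point_def)
  next
    fix y assume "y \<in> torus"
    then obtain t v where y: "y = (t, v)" and "t \<in> Fq" "t \<noteq> 0" "v \<in> Fq" "v \<noteq> 0"
      by (auto simp: torus_def)
    then obtain i j where "i < q - 1" "t = g ^ i" "j < q - 1" "v = g ^ j"
      by (metis Fq_nonzero_imp_g_power)
    then have "y = torus_point (int i, int j)" and "(int i, int j) \<in> grid (int (q - 1))"
      by (auto simp: y torus_point_def)
    then show "y \<in> torus_point ` grid (int (q - 1))"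
      by (rule image_eqI)
  qed
  ultimately show ?thesis
    by (simp add: bij_betw_def)
qed

lemma torus_point_torus_map:
  assumes "X \<in> grid (int (q - 1))"
  shows "torus_point (torus_map (int (q - 1)) X) = coord_map (torus_point X)"
proof -
  obtain T V where X: "X = (T, V)" "0 \<le> T" "0 \<le> V"
    using assms by force
  have "g ^ nat ((1 + 2 * V) mod int (q - 1)) = g ^ (1 + 2 * nat V)"
    using X g_power_mod[of "1 + 2 * nat V"] by (simp add: nat_mod_distrib nat_add_distrib nat_mult_distrib)
  also have "\<dots> = g * (g ^ nat V)\<^sup>2"
    by (simp add: power_mult[symmetric] mult.commute)
  finally have 1: "g ^ nat ((1 + 2 * V) mod int (q - 1)) = g * (g ^ nat V)\<^sup>2" .
  have "g ^ nat ((T + V) mod int (q - 1)) = g ^ (nat T + nat V)"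
    using X g_power_mod[of "nat T + nat V"] by (simp add: nat_mod_distrib nat_add_distrib)
  then have 2: "g ^ nat ((T + V) mod int (q - 1)) = g ^ nat T * g ^ nat V"
    by (simp only: power_add)
  show ?thesis
    by (simp only: X torus_point_def torus_map_def coord_map_def prod.case 1 2)
qed

lemma fg_iso_torus: "fg_iso (torus, coord_map) (grid (int (q - 1)), torus_map (int (q - 1)))"
proof (rule fg_iso_sym)
  show "fg_iso (grid (int (q - 1)), torus_map (int (q - 1))) (torus, coord_map)"
    using bij_betw_torus_point torus_point_torus_map by (rule fg_isoI)
  show "torus_map (int (q - 1)) X \<in> grid (int (q - 1))" for X
    using q_gt_1 by (intro torus_map_in_grid) simp
qed

text \<open>On the axes \<open>(t, 0) \<mapsto> (0, 0)\<close> and \<open>(0, v) \<mapsto> (g v\<^sup>2, 0)\<close>: the points \<open>(g\<^sup>2\<^sup>j\<^sup>+\<^sup>1, 0)\<close> have the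
  two preimages \<open>(0, \<plusminus>g\<^sup>j)\<close>, since \<open>-1 = g\<^bsup>(q-1)/2\<^esup>\<close>, and the points \<open>(g\<^sup>2\<^sup>j, 0)\<close> have none.\<close>

definition axis_point :: "(bool \<times> nat \<times> bool list) option \<Rightarrow> 'a \<times> 'a" where
  "axis_point z = (case z of
      None \<Rightarrow> (0, 0)
    | Some (False, j, _) \<Rightarrow> (g ^ (2 * j), 0)
    | Some (True, j, []) \<Rightarrow> (g ^ (2 * j + 1), 0)
    | Some (True, j, b # _) \<Rightarrow> (0, g ^ (j + of_bool b * half)))"

lemma Z_verts_iff:
  "z \<in> Z_verts q \<longleftrightarrow> z = None \<or> (\<exists>j < half. z = Some (False, j, []) \<or> z = Some (True, j, [])
     \<or> (\<exists>b. z = Some (True, j, [b])))"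
proof -
  have "length bs < 2 \<longleftrightarrow> bs = [] \<or> (\<exists>b. bs = [b])" for bs :: "bool list"
    by (cases bs) auto
  then show ?thesis
    by (auto simp: Z_verts_def half_def)
qed

lemma Z_map_in_Z_verts: "z \<in> Z_verts q \<Longrightarrow> Z_map z \<in> Z_verts q"
  unfolding Z_verts_iff by auto

lemma axis_point_Z_map:
  assumes "z \<in> Z_verts q"
  shows "axis_point (Z_map z) = coord_map (axis_point z)"
proof -
  have sq: "g * (g ^ j)\<^sup>2 = g ^ (2 * j + 1)" for j
    by (simp add: power_mult[symmetric] mult.commute)
  have period: "g ^ (i + 2 * half) = g ^ i" for i
    using g_power_q_minus_1 unfolding q_minus_1_eq by (simp add: power_add)
  from assms show ?thesis
    unfolding Z_verts_iff
    by (auto simp: axis_point_def coord_map_def sq period simp del: power_Suc power_Suc2)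
qed

lemma axis_point_in_axes: "z \<in> Z_verts q \<Longrightarrow> axis_point z \<in> axes"
  unfolding Z_verts_iff using g_power_in_Fq Fq_zero g_power_in_Fq[of 1]
  by (auto simp: axis_point_def axes_def Fq_mult)

lemma card_Fq: "card Fq = q"
proof -
  have "Fq = insert 0 ((\<lambda>i. g ^ i) ` {..<q - 1})"
    using Fq_zero g_power_in_Fq by (auto elim: Fq_nonzero_imp_g_power)
  moreover have "inj_on (\<lambda>i. g ^ i) {..<q - 1}"
    using g_power_inj by (auto simp: inj_on_def)
  moreover have "0 \<notin> (\<lambda>i. g ^ i) ` {..<q - 1}"
    using g_nonzero by auto
  ultimately show ?thesis
    using q_gt_1 by (simp add: card_image)
qed

lemma card_axes: "card axes = 2 * q - 1"
proof -
  let ?A = "(Fq - {0}) \<times> {0}" and ?B = "{0} \<times> (Fq - {0})"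
  have "axes = insert (0, 0) (?A \<union> ?B)"
    using Fq_zero by (auto simp: axes_def)
  moreover have "card ?A = q - 1" and "card ?B = q - 1"
    using card_Fq Fq_zero by (simp_all add: card_cartesian_product)
  moreover have "?A \<inter> ?B = {}" and "(0, 0) \<notin> ?A \<union> ?B" and "finite (?A \<union> ?B)"
    by auto
  ultimately show ?thesis
    using q_gt_1 by (simp add: card_Un_disjoint)
qed

lemma card_Z_verts: "card (Z_verts q) = 2 * q - 1"
proof -
  let ?A = "(\<lambda>j. Some (False, j, [] :: bool list)) ` {..<half}"
  let ?B = "(\<lambda>(j, bs). Some (True, j, bs :: bool list)) ` ({..<half} \<times> {[], [False], [True]})"
  have Z: "Z_verts q = insert None (?A \<union> ?B)"
    by (auto simp: Z_verts_iff)
  have "card (Z_verts q) = Suc (card (?A \<union> ?B))"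
    unfolding Z by (rule card_insert_disjoint) auto
  also have "card (?A \<union> ?B) = card ?A + card ?B"
    by (subst card_Un_disjoint) auto
  also have "card ?A = half"
    by (simp add: card_image inj_on_def)
  also have "card ?B = half * 3"
    by (subst card_image) (auto simp: inj_on_def card_cartesian_product)
  finally show ?thesis
    using q_minus_1_eq q_gt_1 by simp
qed

lemma t_axis_in_axis_points:
  assumes "t \<in> Fq" and "t \<noteq> 0"
  shows "(t, 0) \<in> axis_point ` Z_verts q"
proof -
  obtain i where i: "i < 2 * half" "t = g ^ i"
    using assms Fq_nonzero_imp_g_power q_minus_1_eq by metis
  show ?thesis
  proof (cases "even i")
    case True
    then obtain j where "i = 2 * j"
      by (rule evenE)
    with i have "(t, 0) = axis_point (Some (False, j, []))" and "Some (False, j, []) \<in> Z_verts q"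
      by (simp_all add: axis_point_def Z_verts_iff)
    then show ?thesis
      by (rule image_eqI)
  next
    case False
    then obtain j where "i = 2 * j + 1"
      by (rule oddE)
    with i have "(t, 0) = axis_point (Some (True, j, []))" and "Some (True, j, []) \<in> Z_verts q"
      by (simp_all add: axis_point_def Z_verts_iff)
    then show ?thesis
      by (rule image_eqI)
  qed
qed

lemma v_axis_in_axis_points:
  assumes "v \<in> Fq" and "v \<noteq> 0"
  shows "(0, v) \<in> axis_point ` Z_verts q"
proof -
  obtain i where i: "i < 2 * half" "v = g ^ i"
    using assms Fq_nonzero_imp_g_power q_minus_1_eq by metis
  show ?thesis
  proof (cases "i < half")
    case True
    with i have "(0, v) = axis_point (Some (True, i, [False]))"
      by (simp add: axis_point_def)
    moreover have "Some (True, i, [False]) \<in> Z_verts q"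
      unfolding Z_verts_iff using True by blast
    ultimately show ?thesis
      by (rule image_eqI)
  next
    case False
    with i have "(0, v) = axis_point (Some (True, i - half, [True]))"
      by (simp add: axis_point_def)
    moreover have "Some (True, i - half, [True]) \<in> Z_verts q"
      unfolding Z_verts_iff using False i by auto
    ultimately show ?thesis
      by (rule image_eqI)
  qed
qed

lemma axes_subset_axis_points: "axes \<subseteq> axis_point ` Z_verts q"
proof
  fix x assume "x \<in> axes"
  then obtain t v where x: "x = (t, v)" and tv: "t \<in> Fq" "v \<in> Fq" "t = 0 \<or> v = 0"
    by (auto simp: axes_def)
  have "(0, 0) = axis_point None" and "None \<in> Z_verts q"
    by (simp_all add: axis_point_def Z_verts_iff)
  then have "(0, 0) \<in> axis_point ` Z_verts q"
    by (rule image_eqI)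
  with tv t_axis_in_axis_points v_axis_in_axis_points show "x \<in> axis_point ` Z_verts q"
    unfolding x by (cases "t = 0"; cases "v = 0") auto
qed

lemma fg_iso_axes: "fg_iso (axes, coord_map) (Z_verts q, Z_map)"
proof (rule fg_iso_sym)
  have image: "axis_point ` Z_verts q = axes"
    using axis_point_in_axes axes_subset_axis_points by blast
  moreover have "finite (Z_verts q)"
    using card_Z_verts q_gt_1 by (intro card_ge_0_finite) simp
  then have "inj_on axis_point (Z_verts q)"
    by (rule eq_card_imp_inj_on) (simp add: image card_Z_verts card_axes)
  ultimately have "bij_betw axis_point (Z_verts q) axes"
    by (simp add: bij_betw_def)
  then show "fg_iso (Z_verts q, Z_map) (axes, coord_map)"
    using axis_point_Z_map by (rule fg_isoI)
qed (rule Z_map_in_Z_verts)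

lemma fg_iso_coord_map:
  assumes "q - 1 = 2 ^ s * r" and "odd r"
  shows "fg_iso (Fq \<times> Fq, coord_map) (target_verts q r s, target_map)"
proof -
  have "0 < s"
    using assms q_minus_1_eq by (cases s) auto
  have split: "Fq \<times> Fq = axes \<union> torus"
    by (auto simp: axes_def torus_def)
  have "axes \<inter> torus = {}"
    by (auto simp: axes_def torus_def)
  have target: "target_verts q r s = Z_verts q <+>
      Sigma {d. d dvd r} (\<lambda>d. {0..<mult_d q d} \<times> cyc_tree_verts (cyc_len d) s)"
    by (auto simp: target_verts_def Plus_def)
  have "target_map z = map_sum Z_map (\<lambda>(d, w). (d, map_prod id (cyc_tree_map (cyc_len d)) w)) z" for z
    by (cases z rule: target_map.cases) simp_all
  then have map: "target_map = map_sum Z_map (\<lambda>(d, w). (d, map_prod id (cyc_tree_map (cyc_len d)) w))"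
    ..
  show ?thesis
    unfolding split target map
    using \<open>axes \<inter> torus = {}\<close> coord_map_axes coord_map_torus fg_iso_axes
      fg_iso_trans[OF fg_iso_torus fg_iso_torus_map[OF assms(1) \<open>0 < s\<close> assms(2)]]
    by (rule fg_iso_Plus)
qed

end

theorem theorem13:
  fixes c :: "'a :: {field, finite}" and p k q s r :: nat
  assumes "prime p" and "odd p" and "k \<ge> 1" and "q = p ^ k"
    and "card (UNIV :: 'a set) = q ^ 2"
    and "q - 1 = 2 ^ s * r" and "odd r"
    and "c ^ q = c" and "c \<noteq> 0"
  shows "fg_iso (UNIV :: 'a set, \<lambda>x. c * (x ^ (q + 1) - x ^ 2))
                (target_verts q r s, target_map)"
proof -
  have "1 < q"
    unfolding assms(4) using prime_gt_1_nat[OF assms(1)] assms(3) by (intro one_less_power) simp_all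
  have "odd q"
    using assms(2,4) by simp
  obtain \<gamma> :: 'a where generates: "\<And>x. x \<noteq> 0 \<Longrightarrow> \<exists>i. x = \<gamma> ^ i"
    and order: "\<And>i. \<gamma> ^ i = 1 \<longleftrightarrow> (q\<^sup>2 - 1) dvd i"
    using finite_field_generator assms(5) by metis
  have frobenius: "(x + y) ^ q = x ^ q + y ^ q" for x y :: 'a
    using finite_field_frobenius_add[OF assms(1), of "2 * k"] assms(4,5)
    by (simp add: power_mult mult.commute)
  interpret quadratic_extension q \<gamma>
    by unfold_locales (use \<open>odd q\<close> \<open>1 < q\<close> frobenius generates order in auto)
  have "c \<in> Fq"
    using assms(8) by (simp add: Fq_def)
  from fg_iso_coords[OF this assms(9)] fg_iso_coord_map[OF assms(6,7)] show ?thesis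
    by (rule fg_iso_trans)
qed

end
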